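(* Let $N\ge 1$ be an integer, let $\eta_1,\eta_2$ be real with $0<\eta_1,\eta_2<1$, $\eta_1+\eta_2<1$, and let $u_1,v_1,u_2,v_2$ be complex numbers. Then the polynomials $P_{m_1,m_2}$ ($m_1,m_2\ge0$ integers, $m_1+m_2\le N$) are mutually orthogonal with respect to the trinomial weight, i.e. \[ \sum_{\substack{x_1,x_2\ge 0\\ x_1+x_2\le N}} b_2(x_1,x_2;N;\eta_1,\eta_2)\,P_{m_1,m_2}(x_1,x_2)P_{n_1,n_2}(x_1,x_2)=0\quad\text{whenever }(m_1,m_2)\neq(n_1,n_2), \] if and only if \[ \text{(a) } \eta_1u_1+\eta_2v_1=1,\qquad \text{(b) } \eta_1u_2+\eta_2v_2=1,\qquad \text{(c) } \eta_1u_1u_2+\eta_2v_1v_2=1 . \] (For the sufficiency direction one may additionally assume $u_1,u_2,v_1,v_2\notin\{0,1\}$ and $u_1v_2-u_2v_1\neq 0$.)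
   Context: Notation: $(a)_k=a(a+1)\cdots(a+k-1)$, $(a)_0=1$, is the Pochhammer symbol. For a nonnegative integer $N$ and nonnegative integers $m_1,m_2,x_1,x_2$ with $m_1+m_2\le N$, $x_1+x_2\le N$, and parameters $u_1,v_1,u_2,v_2$, define the 2-variable Krawtchouk polynomial \[ P_{m_1,m_2}(x_1,x_2)=\sum_{\substack{i,j,k,l\ge 0\\ i+j+k+l\le N}}\frac{(-m_1)_{i+j}(-m_2)_{k+l}(-x_1)_{i+k}(-x_2)_{j+l}}{i!\,j!\,k!\,l!\,(-N)_{i+j+k+l}}\,u_1^i v_1^j u_2^k v_2^l . \] The trinomial distribution is $b_2(x_1,x_2;N;\eta_1,\eta_2)=\frac{N!}{x_1!\,x_2!\,(N-x_1-x_2)!}\eta_1^{x_1}\eta_2^{x_2}(1-\eta_1-\eta_2)^{N-x_1-x_2}$. *)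

theory Defs
  imports Complex_Main
begin

definition kraw2 ::
  "nat \<Rightarrow> complex \<Rightarrow> complex \<Rightarrow> complex \<Rightarrow> complex \<Rightarrow> nat \<Rightarrow> nat \<Rightarrow> nat \<Rightarrow> nat \<Rightarrow> complex" where
  "kraw2 N u1 v1 u2 v2 m1 m2 x1 x2 =
     (\<Sum>(i,j,k,l) \<in> {(i,j,k,l). i + j + k + l \<le> N}.
        pochhammer (- of_nat m1) (i + j) * pochhammer (- of_nat m2) (k + l)
        * pochhammer (- of_nat x1) (i + k) * pochhammer (- of_nat x2) (j + l)
        / (of_nat (fact i * fact j * fact k * fact l) * pochhammer (- of_nat N) (i + j + k + l))
        * u1 ^ i * v1 ^ j * u2 ^ k * v2 ^ l)"

definition trinomial :: "nat \<Rightarrow> nat \<Rightarrow> nat \<Rightarrow> real \<Rightarrow> real \<Rightarrow> real" where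
  "trinomial x1 x2 N eta1 eta2 =
     fact N / (fact x1 * fact x2 * fact (N - x1 - x2))
     * eta1 ^ x1 * eta2 ^ x2 * (1 - eta1 - eta2) ^ (N - x1 - x2)"

end

theory Submission
  imports Defs
begin

(*
  With the trinomial coefficients c(N;m1,m2) = N!/(m1! m2! (N-m1-m2)!) as weights, the polynomials
  have the closed generating function
     sum_m c(N;m) P_m(x) t1^m1 t2^m2 = T^(N-x1-x2) A^x1 B^x2,
  where T = 1+t1+t2, A = 1+(1-u1)t1+(1-u2)t2, B = 1+(1-v1)t1+(1-v2)t2.  Summing the product of two
  such generating functions against the trinomial weight and applying the trinomial theorem once
  more, the generating polynomial of the weighted Gram matrix c(N;m) c(N;n) <P_m,P_n> becomes
  Q(t,s)^N for an explicit polynomial Q of degree one in t and in s.  A short argument on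
  polynomial coefficients shows that Q^N has diagonal coefficient array (no monomials t^m s^n with
  m /= n) iff the linear terms and the mixed terms t1 s2, t2 s1 of Q vanish, which are exactly
  conditions (a)-(c).  Hence orthogonality is EQUIVALENT to (a)-(c).
*)

(* The trinomial coefficient N!/(a! b! (N-a-b)!), defined without division so that it
   vanishes automatically outside the triangle a + b <= N. *)
definition trinom :: "nat \<Rightarrow> nat \<Rightarrow> nat \<Rightarrow> nat" where
  "trinom n a b = (n choose a) * ((n - a) choose b)"

lemma trinom_eq_0_iff: "trinom n a b = 0 \<longleftrightarrow> n < a + b"
  by (cases "a \<le> n") (auto simp: trinom_def)

lemma trinom_eq_0: "n < a + b \<Longrightarrow> trinom n a b = 0"
  by (simp add: trinom_eq_0_iff)

lemma trinom_fact:
  assumes "a + b \<le> n"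
  shows "(of_nat (trinom n a b) :: 'a::field_char_0) = fact n / (fact a * fact b * fact (n - a - b))"
proof -
  have "(of_nat (trinom n a b) :: 'a)
      = fact n / (fact a * fact (n - a)) * (fact (n - a) / (fact b * fact (n - a - b)))"
    using assms by (simp add: trinom_def binomial_fact)
  then show ?thesis by (simp add: field_simps)
qed

(* The trinomial theorem; the index box may be larger than the triangle since the
   coefficients vanish outside it. *)
lemma trinomial_theorem:
  fixes x y z :: "'a::comm_semiring_1"
  assumes "n \<le> M1" "n \<le> M2"
  shows "(\<Sum>i\<le>M1. \<Sum>k\<le>M2. of_nat (trinom n i k) * x^i * y^k * z^(n-i-k)) = (x + y + z)^n"
proof -
  have "(x + y + z)^n = (\<Sum>i\<le>n. of_nat (n choose i) * x^i * (y + z)^(n-i))"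
    by (simp add: add.assoc binomial_ring)
  also have "\<dots> = (\<Sum>i\<le>n. \<Sum>k\<le>n-i. of_nat (trinom n i k) * x^i * y^k * z^(n-i-k))"
    by (simp add: binomial_ring sum_distrib_left trinom_def mult_ac)
  also have "\<dots> = (\<Sum>i\<le>n. \<Sum>k\<le>M2. of_nat (trinom n i k) * x^i * y^k * z^(n-i-k))"
    by (rule sum.cong[OF refl], rule sum.mono_neutral_left)
      (use assms in \<open>simp_all add: Ball_def not_le trinom_def binomial_eq_0\<close>)
  also have "\<dots> = (\<Sum>i\<le>M1. \<Sum>k\<le>M2. of_nat (trinom n i k) * x^i * y^k * z^(n-i-k))"
    by (intro sum.mono_neutral_left) (use assms in \<open>auto simp: trinom_eq_0 intro!: sum.neutral\<close>)
  finally show ?thesis ..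
qed

lemma sum_triangle_trinom:
  fixes f :: "nat \<Rightarrow> nat \<Rightarrow> 'a::comm_semiring_1"
  shows "(\<Sum>(a,b)\<in>{(a,b). a + b \<le> n}. of_nat (trinom n a b) * f a b)
       = (\<Sum>a\<le>n. \<Sum>b\<le>n. of_nat (trinom n a b) * f a b)"
proof -
  have "(\<Sum>(a,b)\<in>{(a,b). a + b \<le> n}. of_nat (trinom n a b) * f a b)
      = (\<Sum>(a,b)\<in>{..n}\<times>{..n}. of_nat (trinom n a b) * f a b)"
    by (rule sum.mono_neutral_left) (auto simp: trinom_eq_0 Ball_def split_paired_all)
  then show ?thesis by (simp add: sum.cartesian_product)
qed

lemma sum_shift_start:
  fixes h :: "nat \<Rightarrow> 'a::comm_monoid_add"
  assumes "p \<le> N"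
  shows "(\<Sum>m\<le>N. if p \<le> m then h (m - p) else 0) = (\<Sum>c\<le>N - p. h c)"
proof -
  have "(\<Sum>m\<le>N. if p \<le> m then h (m - p) else 0) = (\<Sum>m\<in>{0 + p..(N - p) + p}. h (m - p))"
    using assms by (intro sum.mono_neutral_cong_right) auto
  also have "\<dots> = (\<Sum>c\<le>N - p. h c)"
    by (simp only: sum.shift_bounds_cl_nat_ivl atLeast0AtMost add_diff_cancel_right')
  finally show ?thesis .
qed

lemma sum_swap_4:
  "(\<Sum>x\<in>X. \<Sum>i\<in>I. \<Sum>j\<in>J. \<Sum>k\<in>K. \<Sum>l\<in>L. f x i j k l)
   = (\<Sum>i\<in>I. \<Sum>j\<in>J. \<Sum>k\<in>K. \<Sum>l\<in>L. \<Sum>x\<in>X. f x i j k l)"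
proof -
  have "(\<Sum>x\<in>X. \<Sum>(i,j,k,l)\<in>I\<times>J\<times>K\<times>L. f x i j k l) = (\<Sum>(i,j,k,l)\<in>I\<times>J\<times>K\<times>L. \<Sum>x\<in>X. f x i j k l)"
    unfolding case_prod_unfold by (rule sum.swap)
  then show ?thesis by (simp add: sum.cartesian_product[symmetric])
qed

lemma sum_product_2_2:
  "(\<Sum>a\<in>A. \<Sum>b\<in>B. f a b) * (\<Sum>c\<in>C. \<Sum>d\<in>D. g c d :: 'a::comm_semiring_0)
   = (\<Sum>a\<in>A. \<Sum>b\<in>B. \<Sum>c\<in>C. \<Sum>d\<in>D. f a b * g c d)"
  by (simp only: sum_distrib_right) (simp only: sum_distrib_left)

lemma sum_product_4:
  "(\<Sum>i\<in>I. \<Sum>j\<in>J. \<Sum>k\<in>K. \<Sum>l\<in>L. f i k * g j l :: 'a::comm_semiring_0)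
   = (\<Sum>i\<in>I. \<Sum>k\<in>K. f i k) * (\<Sum>j\<in>J. \<Sum>l\<in>L. g j l)"
proof -
  have "(\<Sum>i\<in>I. \<Sum>j\<in>J. \<Sum>k\<in>K. \<Sum>l\<in>L. f i k * g j l) = (\<Sum>i\<in>I. \<Sum>k\<in>K. \<Sum>j\<in>J. \<Sum>l\<in>L. f i k * g j l)"
    by (rule sum.cong[OF refl], rule sum.swap)
  also have "\<dots> = (\<Sum>i\<in>I. \<Sum>k\<in>K. f i k * (\<Sum>j\<in>J. \<Sum>l\<in>L. g j l))"
    by (simp only: sum_distrib_left)
  finally show ?thesis by (simp only: sum_distrib_right)
qed

lemma pochhammer_neg_of_nat:
  "pochhammer (- of_nat n :: 'a::field_char_0) k = (if k \<le> n then (-1)^k * fact n / fact (n - k) else 0)"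
proof (cases "k \<le> n")
  case True
  have "(of_nat (n choose k) :: 'a) = (-1)^k * pochhammer (- of_nat n) k / fact k"
    by (simp add: binomial_gbinomial gbinomial_pochhammer)
  moreover have "(of_nat (n choose k) :: 'a) = fact n / (fact k * fact (n - k))"
    using True by (rule binomial_fact)
  ultimately have "(-1)^k * pochhammer (- of_nat n :: 'a) k = fact n / fact (n - k)"
    by (simp add: field_simps)
  then have "(-1)^k * ((-1)^k * pochhammer (- of_nat n :: 'a) k) = (-1)^k * fact n / fact (n - k)"
    by simp
  then show ?thesis
    using True by (simp flip: power_add add: mult_2[symmetric] power_mult)
qed (simp add: pochhammer_of_nat_eq_0_lemma)

lemma pochhammer_neg_of_nat_trinom:
  "pochhammer (- of_nat x :: 'a::field_char_0) (i + k) / (fact i * fact k) = (-1)^(i + k) * of_nat (trinom x i k)"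
  by (cases "i + k \<le> x") (simp_all add: pochhammer_neg_of_nat trinom_fact trinom_eq_0 field_simps)

(* The building block of the Krawtchouk polynomials that depends on one variable x:
   (-x)_(i+k) a^i b^k / (i! k!). *)
definition kraw_factor :: "nat \<Rightarrow> 'a \<Rightarrow> 'a \<Rightarrow> nat \<Rightarrow> nat \<Rightarrow> 'a::field_char_0" where
  "kraw_factor x a b i k = pochhammer (- of_nat x) (i + k) / (fact i * fact k) * a^i * b^k"

lemma kraw_factor_eq_0: "x < i + k \<Longrightarrow> kraw_factor x a b i k = 0"
  by (simp add: kraw_factor_def pochhammer_of_nat_eq_0_lemma)

lemma neg_trinomial_theorem:
  fixes a b T :: "'a::field_char_0"
  assumes "x \<le> M"
  shows "(\<Sum>i\<le>M. \<Sum>k\<le>M. kraw_factor x a b i k * T^(x-i-k)) = (T - a - b)^x"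
proof -
  have "(\<Sum>i\<le>M. \<Sum>k\<le>M. kraw_factor x a b i k * T^(x-i-k))
      = (\<Sum>i\<le>M. \<Sum>k\<le>M. of_nat (trinom x i k) * (-a)^i * (-b)^k * T^(x-i-k))"
    by (simp add: kraw_factor_def pochhammer_neg_of_nat_trinom power_minus[of a] power_minus[of b]
        power_add mult_ac)
  also have "\<dots> = (T - a - b)^x"
    using trinomial_theorem[OF assms assms, of "-a" "-b" T] by (simp add: algebra_simps)
  finally show ?thesis .
qed

(* The part of the Krawtchouk summand that depends on the degree (m1,m2). *)
definition poch_ratio :: "nat \<Rightarrow> nat \<Rightarrow> nat \<Rightarrow> nat \<Rightarrow> nat \<Rightarrow> 'a::field_char_0" where
  "poch_ratio N m1 m2 p q =
     pochhammer (- of_nat m1) p * pochhammer (- of_nat m2) q / pochhammer (- of_nat N) (p + q)"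

lemma pochhammer_ratio_trinom:
  assumes "p \<le> m1" "q \<le> m2" "p + q \<le> N"
  shows "of_nat (trinom N m1 m2) * poch_ratio N m1 m2 p q
         = (of_nat (trinom (N - p - q) (m1 - p) (m2 - q)) :: 'a::field_char_0)"
proof (cases "m1 + m2 \<le> N")
  case True
  obtain c1 c2 r where c: "m1 = p + c1" "m2 = q + c2" "N = p + q + c1 + c2 + r"
    using True assms(1,2) by (metis add.assoc add.left_commute le_Suc_ex)
  have poch: "pochhammer (- of_nat m1 :: 'a) p = (-1)^p * fact m1 / fact (m1 - p)"
    "pochhammer (- of_nat m2 :: 'a) q = (-1)^q * fact m2 / fact (m2 - q)"
    "pochhammer (- of_nat N :: 'a) (p + q) = (-1)^(p + q) * fact N / fact (N - (p + q))"
    using assms by (simp_all add: pochhammer_neg_of_nat)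
  show ?thesis
    using True assms unfolding poch_ratio_def poch unfolding c
    by (simp add: trinom_fact field_simps power_add)
qed (use assms in \<open>simp add: trinom_eq_0\<close>)

lemma pochhammer_ratio_generating:
  fixes t1 t2 :: "'a::field_char_0"
  assumes "p + q \<le> N"
  shows "(\<Sum>m1\<le>N. \<Sum>m2\<le>N. of_nat (trinom N m1 m2) * poch_ratio N m1 m2 p q * t1^m1 * t2^m2)
       = t1^p * t2^q * (1 + t1 + t2)^(N - p - q)"
proof -
  define h where "h c1 c2 = of_nat (trinom (N - p - q) c1 c2) * t1^(c1 + p) * t2^(c2 + q)" for c1 c2
  have "of_nat (trinom N m1 m2) * poch_ratio N m1 m2 p q * t1^m1 * t2^m2
        = (if p \<le> m1 then if q \<le> m2 then h (m1 - p) (m2 - q) else 0 else 0)" for m1 m2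
  proof (cases "p \<le> m1 \<and> q \<le> m2")
    case True
    then have "p \<le> m1" "q \<le> m2" by auto
    show ?thesis
      unfolding pochhammer_ratio_trinom[OF \<open>p \<le> m1\<close> \<open>q \<le> m2\<close> assms]
      using True by (simp add: h_def)
  qed (auto simp: poch_ratio_def pochhammer_of_nat_eq_0_lemma)
  then have "(\<Sum>m1\<le>N. \<Sum>m2\<le>N. of_nat (trinom N m1 m2) * poch_ratio N m1 m2 p q * t1^m1 * t2^m2)
      = (\<Sum>m1\<le>N. if p \<le> m1 then \<Sum>m2\<le>N. if q \<le> m2 then h (m1 - p) (m2 - q) else 0 else 0)"
    by (intro sum.cong refl) auto
  also have "\<dots> = (\<Sum>c1\<le>N - p. \<Sum>m2\<le>N. if q \<le> m2 then h c1 (m2 - q) else 0)"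
    using assms by (intro sum_shift_start) auto
  also have "\<dots> = (\<Sum>c1\<le>N - p. \<Sum>c2\<le>N - q. h c1 c2)"
    using assms by (intro sum.cong refl sum_shift_start) auto
  also have "\<dots> = t1^p * t2^q * (\<Sum>c1\<le>N - p. \<Sum>c2\<le>N - q. of_nat (trinom (N - p - q) c1 c2) * t1^c1 * t2^c2 * 1^(N-p-q-c1-c2))"
    by (simp add: h_def sum_distrib_left power_add mult_ac)
  also have "\<dots> = t1^p * t2^q * (1 + t1 + t2)^(N - p - q)"
    by (subst trinomial_theorem) (auto simp: add_ac)
  finally show ?thesis .
qed

(* The Krawtchouk polynomial as a box sum of (degree part) times (variable parts); the
   terms outside the simplex i+j+k+l <= N vanish as (-N)_(i+j+k+l) = 0 there. *)
lemma kraw2_expansion: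
  "kraw2 N u1 v1 u2 v2 m1 m2 x1 x2 =
     (\<Sum>i\<le>N. \<Sum>j\<le>N. \<Sum>k\<le>N. \<Sum>l\<le>N.
        poch_ratio N m1 m2 (i + j) (k + l) * kraw_factor x1 u1 u2 i k * kraw_factor x2 v1 v2 j l)"
proof -
  have "kraw2 N u1 v1 u2 v2 m1 m2 x1 x2 =
     (\<Sum>(i,j,k,l)\<in>{(i,j,k,l). i + j + k + l \<le> N}.
        poch_ratio N m1 m2 (i + j) (k + l) * kraw_factor x1 u1 u2 i k * kraw_factor x2 v1 v2 j l)"
    unfolding kraw2_def poch_ratio_def kraw_factor_def
    by (intro sum.cong refl) (auto simp: add_ac mult_ac)
  also have "\<dots> = (\<Sum>(i,j,k,l)\<in>{..N}\<times>{..N}\<times>{..N}\<times>{..N}.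
        poch_ratio N m1 m2 (i + j) (k + l) * kraw_factor x1 u1 u2 i k * kraw_factor x2 v1 v2 j l)"
    by (intro sum.mono_neutral_left)
      (auto simp: poch_ratio_def pochhammer_of_nat_eq_0_iff add.assoc)
  finally show ?thesis by (simp add: sum.cartesian_product[symmetric])
qed

definition kraw_gen ::
  "nat \<Rightarrow> complex \<Rightarrow> complex \<Rightarrow> complex \<Rightarrow> complex \<Rightarrow> nat \<Rightarrow> nat \<Rightarrow> complex \<Rightarrow> complex \<Rightarrow> complex" where
  "kraw_gen N u1 v1 u2 v2 x1 x2 t1 t2 =
     (\<Sum>m1\<le>N. \<Sum>m2\<le>N. of_nat (trinom N m1 m2) * kraw2 N u1 v1 u2 v2 m1 m2 x1 x2 * t1^m1 * t2^m2)"

lemma kraw_generating_term: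
  fixes t1 t2 :: complex
  defines "T \<equiv> 1 + t1 + t2"
  assumes "x1 + x2 \<le> N"
  shows "kraw_factor x1 u1 u2 i k * kraw_factor x2 v1 v2 j l
           * (\<Sum>m1\<le>N. \<Sum>m2\<le>N. of_nat (trinom N m1 m2) * poch_ratio N m1 m2 (i + j) (k + l) * t1^m1 * t2^m2)
         = T^(N - x1 - x2) * (kraw_factor x1 (u1 * t1) (u2 * t2) i k * T^(x1 - i - k))
             * (kraw_factor x2 (v1 * t1) (v2 * t2) j l * T^(x2 - j - l))"
proof (cases "i + k \<le> x1 \<and> j + l \<le> x2")
  case True
  then have "(i + j) + (k + l) \<le> N" and
    exps: "N - (i + j) - (k + l) = (N - x1 - x2) + (x1 - i - k) + (x2 - j - l)"
    using assms(2) by auto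
  then show ?thesis
    unfolding pochhammer_ratio_generating[OF \<open>(i + j) + (k + l) \<le> N\<close>] exps T_def
    by (simp add: kraw_factor_def power_add power_mult_distrib mult_ac)
qed (auto simp: kraw_factor_eq_0)

lemma kraw_generating_function:
  assumes "x1 + x2 \<le> N"
  shows "kraw_gen N u1 v1 u2 v2 x1 x2 t1 t2 =
           (1 + t1 + t2)^(N - x1 - x2) * (1 + (1 - u1) * t1 + (1 - u2) * t2)^x1
             * (1 + (1 - v1) * t1 + (1 - v2) * t2)^x2"
proof -
  define T where "T = 1 + t1 + t2"
  define X where "X i j k l = kraw_factor x1 u1 u2 i k * kraw_factor x2 v1 v2 j l" for i j k l
  define G where "G p q = (\<Sum>m1\<le>N. \<Sum>m2\<le>N. of_nat (trinom N m1 m2) * poch_ratio N m1 m2 p q * t1^m1 * t2^m2)"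
    for p q :: nat
  have "kraw_gen N u1 v1 u2 v2 x1 x2 t1 t2 =
    (\<Sum>(m1,m2)\<in>{..N}\<times>{..N}. \<Sum>i\<le>N. \<Sum>j\<le>N. \<Sum>k\<le>N. \<Sum>l\<le>N.
       X i j k l * (of_nat (trinom N m1 m2) * poch_ratio N m1 m2 (i + j) (k + l) * t1^m1 * t2^m2))"
    unfolding kraw_gen_def kraw2_expansion sum.cartesian_product[symmetric]
    by (simp add: sum_distrib_left sum_distrib_right mult_ac X_def)
  also have "\<dots> = (\<Sum>i\<le>N. \<Sum>j\<le>N. \<Sum>k\<le>N. \<Sum>l\<le>N. \<Sum>(m1,m2)\<in>{..N}\<times>{..N}.
       X i j k l * (of_nat (trinom N m1 m2) * poch_ratio N m1 m2 (i + j) (k + l) * t1^m1 * t2^m2))"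
    unfolding case_prod_unfold by (rule sum_swap_4)
  also have "\<dots> = (\<Sum>i\<le>N. \<Sum>j\<le>N. \<Sum>k\<le>N. \<Sum>l\<le>N. X i j k l * G (i + j) (k + l))"
    unfolding G_def by (simp add: sum_distrib_left sum.cartesian_product[symmetric])
  also have "\<dots> = (\<Sum>i\<le>N. \<Sum>j\<le>N. \<Sum>k\<le>N. \<Sum>l\<le>N. T^(N - x1 - x2) *
      ((kraw_factor x1 (u1 * t1) (u2 * t2) i k * T^(x1 - i - k)) * (kraw_factor x2 (v1 * t1) (v2 * t2) j l * T^(x2 - j - l))))"
    unfolding X_def G_def T_def kraw_generating_term[OF assms] by (simp add: mult_ac)
  also have "\<dots> = T^(N - x1 - x2) * (\<Sum>i\<le>N. \<Sum>j\<le>N. \<Sum>k\<le>N. \<Sum>l\<le>N.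
      (kraw_factor x1 (u1 * t1) (u2 * t2) i k * T^(x1 - i - k)) * (kraw_factor x2 (v1 * t1) (v2 * t2) j l * T^(x2 - j - l)))"
    by (simp only: sum_distrib_left)
  also have "\<dots> = T^(N - x1 - x2) * ((\<Sum>i\<le>N. \<Sum>k\<le>N. kraw_factor x1 (u1 * t1) (u2 * t2) i k * T^(x1 - i - k))
      * (\<Sum>j\<le>N. \<Sum>l\<le>N. kraw_factor x2 (v1 * t1) (v2 * t2) j l * T^(x2 - j - l)))"
    by (simp only: sum_product_4)
  also have "\<dots> = T^(N - x1 - x2) * (T - u1 * t1 - u2 * t2)^x1 * (T - v1 * t1 - v2 * t2)^x2"
    using assms
    by (simp only: neg_trinomial_theorem[of x1 N] neg_trinomial_theorem[of x2 N] mult.assoc)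
  finally show ?thesis
    unfolding T_def by (simp add: algebra_simps)
qed

definition poly4 :: "nat \<Rightarrow> (nat \<Rightarrow> nat \<Rightarrow> nat \<Rightarrow> nat \<Rightarrow> 'a) \<Rightarrow> 'a \<Rightarrow> 'a \<Rightarrow> 'a \<Rightarrow> 'a \<Rightarrow> 'a::comm_semiring_1" where
  "poly4 N C t1 t2 s1 s2 = (\<Sum>a\<le>N. \<Sum>b\<le>N. \<Sum>c\<le>N. \<Sum>d\<le>N. C a b c d * (t1^a * t2^b * s1^c * s2^d))"

definition diagonal4 :: "nat \<Rightarrow> (nat \<Rightarrow> nat \<Rightarrow> nat \<Rightarrow> nat \<Rightarrow> 'a::zero) \<Rightarrow> bool" where
  "diagonal4 N C \<longleftrightarrow> (\<forall>a b c d. a \<le> N \<longrightarrow> b \<le> N \<longrightarrow> c \<le> N \<longrightarrow> d \<le> N \<longrightarrow> (a, b) \<noteq> (c, d) \<longrightarrow> C a b c d = 0)"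

lemma poly4_horner:
  "poly4 N C t1 t2 s1 s2 = (\<Sum>a\<le>N. (\<Sum>b\<le>N. (\<Sum>c\<le>N. (\<Sum>d\<le>N. C a b c d * s2^d) * s1^c) * t2^b) * t1^a)"
  unfolding poly4_def sum_distrib_right by (simp only: mult_ac)

lemma polyfun_coeff_eq:
  fixes f g :: "nat \<Rightarrow> 'a::{idom,real_normed_div_algebra}"
  assumes "\<And>z. (\<Sum>i\<le>N. f i * z^i) = (\<Sum>i\<le>N. g i * z^i)" "i \<le> N"
  shows "f i = g i"
  using assms polyfun_eq_coeffs[of f N g] by blast

lemma poly4_coeffs_unique:
  fixes C D :: "nat \<Rightarrow> nat \<Rightarrow> nat \<Rightarrow> nat \<Rightarrow> 'a::real_normed_field"
  assumes "\<And>t1 t2 s1 s2. poly4 N C t1 t2 s1 s2 = poly4 N D t1 t2 s1 s2"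
    and "a \<le> N" "b \<le> N" "c \<le> N" "d \<le> N"
  shows "C a b c d = D a b c d"
proof -
  have "(\<Sum>b\<le>N. (\<Sum>c\<le>N. (\<Sum>d\<le>N. C a b c d * s2^d) * s1^c) * t2^b)
      = (\<Sum>b\<le>N. (\<Sum>c\<le>N. (\<Sum>d\<le>N. D a b c d * s2^d) * s1^c) * t2^b)" for t2 s1 s2
    by (rule polyfun_coeff_eq[OF assms(1)[unfolded poly4_horner] \<open>a \<le> N\<close>])
  then have "(\<Sum>c\<le>N. (\<Sum>d\<le>N. C a b c d * s2^d) * s1^c) = (\<Sum>c\<le>N. (\<Sum>d\<le>N. D a b c d * s2^d) * s1^c)" for s1 s2
    by (rule polyfun_coeff_eq[OF _ \<open>b \<le> N\<close>])
  then have "(\<Sum>d\<le>N. C a b c d * s2^d) = (\<Sum>d\<le>N. D a b c d * s2^d)" for s2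
    by (rule polyfun_coeff_eq[OF _ \<open>c \<le> N\<close>])
  then show ?thesis
    by (rule polyfun_coeff_eq[OF _ \<open>d \<le> N\<close>])
qed

lemma poly4_diagonal_at_zero:
  assumes "diagonal4 N C"
  shows "poly4 N C t1 t2 0 0 = C 0 0 0 0" and "poly4 N C t1 0 0 s2 = C 0 0 0 0"
proof -
  have "poly4 N C t1 t2 0 0 = (\<Sum>a\<le>N. \<Sum>b\<le>N. \<Sum>c\<le>N. \<Sum>d\<le>N.
          if d = 0 then if c = 0 then if b = 0 then if a = 0 then C 0 0 0 0 else 0 else 0 else 0 else 0)"
    unfolding poly4_def using assms unfolding diagonal4_def
    by (intro sum.cong refl) (auto simp: power_0_left)
  then show "poly4 N C t1 t2 0 0 = C 0 0 0 0" by simp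
  have "poly4 N C t1 0 0 s2 = (\<Sum>a\<le>N. \<Sum>b\<le>N. \<Sum>c\<le>N. \<Sum>d\<le>N.
          if d = 0 then if c = 0 then if b = 0 then if a = 0 then C 0 0 0 0 else 0 else 0 else 0 else 0)"
    unfolding poly4_def using assms unfolding diagonal4_def
    by (intro sum.cong refl) (auto simp: power_0_left)
  then show "poly4 N C t1 0 0 s2 = C 0 0 0 0" by simp
qed

(* If (1 + c z)^N is constantly 1 with N >= 1, then c = 0 (evaluate at z = 1/c). *)
lemma power_affine_const_imp_zero:
  fixes c :: "'a::field_char_0"
  assumes "\<And>z. (1 + c * z)^N = 1" and "N \<ge> 1"
  shows "c = 0"
proof (rule ccontr)
  assume "c \<noteq> 0"
  then have "(of_nat (2^N) :: 'a) = of_nat 1"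
    using assms(1)[of "1 / c"] by simp
  then have "(2::nat)^N = 1"
    by (simp only: of_nat_eq_iff)
  then show False
    using assms(2) by simp
qed

lemma poly4_diagonal_power:
  fixes N :: nat and \<alpha> \<beta> :: "'a::comm_semiring_1"
  defines "D \<equiv> \<lambda>a b c d. if (a, b) = (c, d) then of_nat (trinom N a b) * \<alpha>^a * \<beta>^b else 0"
  shows "poly4 N D t1 t2 s1 s2 = (1 + \<alpha> * t1 * s1 + \<beta> * t2 * s2)^N" and "diagonal4 N D"
proof -
  have "D a b c d * (t1^a * t2^b * s1^c * s2^d) = (if d = b then if c = a then
          of_nat (trinom N a b) * (\<alpha> * t1 * s1)^a * (\<beta> * t2 * s2)^b * 1^(N-a-b) else 0 else 0)" for a b c d
    by (auto simp: D_def power_mult_distrib mult_ac)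
  then have "poly4 N D t1 t2 s1 s2 = (\<Sum>a\<le>N. \<Sum>b\<le>N. of_nat (trinom N a b) * (\<alpha> * t1 * s1)^a * (\<beta> * t2 * s2)^b * 1^(N-a-b))"
    unfolding poly4_def by simp
  also have "\<dots> = (1 + \<alpha> * t1 * s1 + \<beta> * t2 * s2)^N"
    by (subst trinomial_theorem) (simp_all add: add_ac)
  finally show "poly4 N D t1 t2 s1 s2 = (1 + \<alpha> * t1 * s1 + \<beta> * t2 * s2)^N" .
  show "diagonal4 N D"
    unfolding diagonal4_def D_def by simp
qed

lemma diagonal4_iff_bilinear:
  fixes C :: "nat \<Rightarrow> nat \<Rightarrow> nat \<Rightarrow> nat \<Rightarrow> 'a::real_normed_field"
  assumes gen: "\<And>t1 t2 s1 s2. poly4 N C t1 t2 s1 s2 =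
      (1 + p * (t1 + s1) + q * (t2 + s2) + \<alpha> * t1 * s1 + \<beta> * t2 * s2 + \<gamma> * (t1 * s2 + t2 * s1))^N"
    and "N \<ge> 1"
  shows "diagonal4 N C \<longleftrightarrow> p = 0 \<and> q = 0 \<and> \<gamma> = 0"
proof
  assume diag: "diagonal4 N C"
  have C0: "C 0 0 0 0 = 1"
    using gen[of 0 0 0 0] poly4_diagonal_at_zero(1)[OF diag, of 0 0] by simp
  have "(1 + p * z)^N = 1" for z
    using gen[of z 0 0 0] poly4_diagonal_at_zero(1)[OF diag, of z 0] C0 by simp
  then have "p = 0" using \<open>N \<ge> 1\<close> by (rule power_affine_const_imp_zero)
  moreover have "(1 + q * z)^N = 1" for z
    using gen[of 0 z 0 0] poly4_diagonal_at_zero(1)[OF diag, of 0 z] C0 by simp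
  then have "q = 0" using \<open>N \<ge> 1\<close> by (rule power_affine_const_imp_zero)
  moreover have "(1 + \<gamma> * z)^N = 1" for z
    using gen[of z 0 0 1] poly4_diagonal_at_zero(2)[OF diag, of z 1] C0 \<open>p = 0\<close> \<open>q = 0\<close> by simp
  then have "\<gamma> = 0" using \<open>N \<ge> 1\<close> by (rule power_affine_const_imp_zero)
  ultimately show "p = 0 \<and> q = 0 \<and> \<gamma> = 0" by blast
next
  assume "p = 0 \<and> q = 0 \<and> \<gamma> = 0"
  define D where "D a b c d = (if (a, b) = (c, d) then of_nat (trinom N a b) * \<alpha>^a * \<beta>^b else 0)"
    for a b c d
  have "poly4 N C t1 t2 s1 s2 = poly4 N D t1 t2 s1 s2" for t1 t2 s1 s2
    unfolding gen D_def poly4_diagonal_power(1) using \<open>p = 0 \<and> q = 0 \<and> \<gamma> = 0\<close> by simp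
  then have "C a b c d = D a b c d" if "a \<le> N" "b \<le> N" "c \<le> N" "d \<le> N" for a b c d
    using poly4_coeffs_unique that by blast
  then show "diagonal4 N C"
    using poly4_diagonal_power(2)[of N \<alpha> \<beta>] unfolding diagonal4_def D_def by simp
qed

lemma poly4_of_products:
  fixes w :: "'x \<Rightarrow> 'a::comm_semiring_1" and g :: "'x \<Rightarrow> nat \<Rightarrow> nat \<Rightarrow> 'a"
  shows "(\<Sum>x\<in>X. w x * (\<Sum>a\<le>N. \<Sum>b\<le>N. g x a b * t1^a * t2^b) * (\<Sum>c\<le>N. \<Sum>d\<le>N. g x c d * s1^c * s2^d))
       = poly4 N (\<lambda>a b c d. \<Sum>x\<in>X. w x * g x a b * g x c d) t1 t2 s1 s2"
proof -
  have "w x * (\<Sum>a\<le>N. \<Sum>b\<le>N. g x a b * t1^a * t2^b) * (\<Sum>c\<le>N. \<Sum>d\<le>N. g x c d * s1^c * s2^d)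
     = (\<Sum>a\<le>N. \<Sum>b\<le>N. \<Sum>c\<le>N. \<Sum>d\<le>N. (w x * g x a b * g x c d) * (t1^a * t2^b * s1^c * s2^d))" for x
    by (simp only: mult.assoc[of "w x"] sum_product_2_2) (simp add: sum_distrib_left mult_ac)
  then have "(\<Sum>x\<in>X. w x * (\<Sum>a\<le>N. \<Sum>b\<le>N. g x a b * t1^a * t2^b) * (\<Sum>c\<le>N. \<Sum>d\<le>N. g x c d * s1^c * s2^d))
     = (\<Sum>x\<in>X. \<Sum>a\<le>N. \<Sum>b\<le>N. \<Sum>c\<le>N. \<Sum>d\<le>N. (w x * g x a b * g x c d) * (t1^a * t2^b * s1^c * s2^d))"
    by simp
  also have "\<dots> = (\<Sum>a\<le>N. \<Sum>b\<le>N. \<Sum>c\<le>N. \<Sum>d\<le>N. \<Sum>x\<in>X. (w x * g x a b * g x c d) * (t1^a * t2^b * s1^c * s2^d))"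
    by (rule sum_swap_4)
  finally show ?thesis
    unfolding poly4_def by (simp only: sum_distrib_right)
qed

definition gram ::
  "nat \<Rightarrow> real \<Rightarrow> real \<Rightarrow> complex \<Rightarrow> complex \<Rightarrow> complex \<Rightarrow> complex \<Rightarrow> nat \<Rightarrow> nat \<Rightarrow> nat \<Rightarrow> nat \<Rightarrow> complex" where
  "gram N eta1 eta2 u1 v1 u2 v2 m1 m2 n1 n2 =
     (\<Sum>(x1,x2)\<in>{(x1,x2). x1 + x2 \<le> N}.
        complex_of_real (trinomial x1 x2 N eta1 eta2)
        * kraw2 N u1 v1 u2 v2 m1 m2 x1 x2 * kraw2 N u1 v1 u2 v2 n1 n2 x1 x2)"

lemma trinomial_trinom:
  assumes "x1 + x2 \<le> N"
  shows "complex_of_real (trinomial x1 x2 N eta1 eta2) =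
     of_nat (trinom N x1 x2) * of_real eta1 ^ x1 * of_real eta2 ^ x2 * (1 - of_real eta1 - of_real eta2) ^ (N - x1 - x2)"
  using assms unfolding trinomial_def by (simp add: trinom_fact)

(* The trinomial-weighted Gram matrix has generating polynomial
   (e1 A(t) A(s) + e2 B(t) B(s) + (1-e1-e2) T(t) T(s))^N, written out in its coefficients. *)
lemma gram_generating_function:
  fixes N :: nat and eta1 eta2 :: real and u1 v1 u2 v2 :: complex
  defines "e1 \<equiv> complex_of_real eta1" and "e2 \<equiv> complex_of_real eta2"
  shows "poly4 N (\<lambda>a b c d. of_nat (trinom N a b * trinom N c d) * gram N eta1 eta2 u1 v1 u2 v2 a b c d)
           t1 t2 s1 s2
       = (1 + (1 - (e1 * u1 + e2 * v1)) * (t1 + s1) + (1 - (e1 * u2 + e2 * v2)) * (t2 + s2)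
            + (e1 * (1 - u1)^2 + e2 * (1 - v1)^2 + (1 - e1 - e2)) * t1 * s1
            + (e1 * (1 - u2)^2 + e2 * (1 - v2)^2 + (1 - e1 - e2)) * t2 * s2
            + (1 - (e1 * u1 + e2 * v1) - (e1 * u2 + e2 * v2) + (e1 * u1 * u2 + e2 * v1 * v2)) * (t1 * s2 + t2 * s1))^N"
    (is "_ = ?Q ^ N")
proof -
  define A where "A t1 t2 = 1 + (1 - u1) * t1 + (1 - u2) * t2" for t1 t2 :: complex
  define B where "B t1 t2 = 1 + (1 - v1) * t1 + (1 - v2) * t2" for t1 t2 :: complex
  define T where "T t1 t2 = 1 + t1 + t2" for t1 t2 :: complex
  define X where "X = {(x1, x2). x1 + x2 \<le> N}"
  define w where "w x = complex_of_real (trinomial (fst x) (snd x) N eta1 eta2)" for x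
  define K where "K x m1 m2 = of_nat (trinom N m1 m2) * kraw2 N u1 v1 u2 v2 m1 m2 (fst x) (snd x)" for x m1 m2
  have "poly4 N (\<lambda>a b c d. of_nat (trinom N a b * trinom N c d) * gram N eta1 eta2 u1 v1 u2 v2 a b c d) t1 t2 s1 s2
      = (\<Sum>x\<in>X. w x * (\<Sum>a\<le>N. \<Sum>b\<le>N. K x a b * t1^a * t2^b) * (\<Sum>c\<le>N. \<Sum>d\<le>N. K x c d * s1^c * s2^d))"
    unfolding poly4_of_products gram_def X_def w_def K_def
    by (simp add: sum_distrib_left case_prod_unfold mult_ac)
  also have "\<dots> = (\<Sum>(x1,x2)\<in>X. of_nat (trinom N x1 x2) * ((e1 * A t1 t2 * A s1 s2)^x1
                     * (e2 * B t1 t2 * B s1 s2)^x2 * ((1 - e1 - e2) * T t1 t2 * T s1 s2)^(N - x1 - x2)))"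
    unfolding X_def w_def K_def kraw_gen_def[symmetric]
    by (intro sum.cong refl)
      (auto simp: trinomial_trinom kraw_generating_function e1_def e2_def A_def B_def T_def
                  power_mult_distrib mult_ac)
  also have "\<dots> = (e1 * A t1 t2 * A s1 s2 + e2 * B t1 t2 * B s1 s2 + (1 - e1 - e2) * T t1 t2 * T s1 s2)^N"
    unfolding X_def sum_triangle_trinom
    using trinomial_theorem[of N N N "e1 * A t1 t2 * A s1 s2" "e2 * B t1 t2 * B s1 s2"
        "(1 - e1 - e2) * T t1 t2 * T s1 s2"]
    by (simp add: mult_ac)
  also have "\<dots> = ?Q ^ N"
    unfolding A_def B_def T_def by (simp add: algebra_simps power2_eq_square)
  finally show ?thesis .
qed

(* Since trinomial coefficients do not vanish on the triangle, the weighted Gram matrix is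
   diagonal iff distinct polynomials are orthogonal. *)
lemma diagonal4_trinom_weighted:
  fixes G :: "nat \<Rightarrow> nat \<Rightarrow> nat \<Rightarrow> nat \<Rightarrow> 'a::field_char_0"
  shows "diagonal4 N (\<lambda>a b c d. of_nat (trinom N a b * trinom N c d) * G a b c d)
     \<longleftrightarrow> (\<forall>a b c d. a + b \<le> N \<longrightarrow> c + d \<le> N \<longrightarrow> (a, b) \<noteq> (c, d) \<longrightarrow> G a b c d = 0)"
  unfolding diagonal4_def
proof (intro iffI allI impI)
  fix a b c d :: nat
  assume diag: "\<forall>a b c d. a \<le> N \<longrightarrow> b \<le> N \<longrightarrow> c \<le> N \<longrightarrow> d \<le> N \<longrightarrow> (a, b) \<noteq> (c, d) \<longrightarrow>
            of_nat (trinom N a b * trinom N c d) * G a b c d = 0"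
    and "a + b \<le> N" "c + d \<le> N" "(a, b) \<noteq> (c, d)"
  then show "G a b c d = 0"
    using diag[rule_format, of a b c d] by (simp add: trinom_eq_0_iff)
next
  fix a b c d :: nat
  assume "\<forall>a b c d. a + b \<le> N \<longrightarrow> c + d \<le> N \<longrightarrow> (a, b) \<noteq> (c, d) \<longrightarrow> G a b c d = 0"
    and "(a, b) \<noteq> (c, d)"
  then show "of_nat (trinom N a b * trinom N c d) * G a b c d = 0"
    by (cases "a + b \<le> N \<and> c + d \<le> N") (auto simp: trinom_eq_0)
qed

(* Orthogonality means that the weighted Gram matrix is diagonal, which by the
   generating function and the key algebraic fact is equivalent to conditions (a)-(c). *)
theorem mainTheorem2:
  fixes N :: nat and eta1 eta2 :: real and u1 v1 u2 v2 :: complex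
  assumes "N \<ge> 1"
    and "0 < eta1" and "eta1 < 1" and "0 < eta2" and "eta2 < 1" and "eta1 + eta2 < 1"
  defines "orth \<equiv> (\<forall>m1 m2 n1 n2. m1 + m2 \<le> N \<longrightarrow> n1 + n2 \<le> N \<longrightarrow> (m1, m2) \<noteq> (n1, n2) \<longrightarrow>
      (\<Sum>(x1,x2) \<in> {(x1,x2). x1 + x2 \<le> N}.
         complex_of_real (trinomial x1 x2 N eta1 eta2)
         * kraw2 N u1 v1 u2 v2 m1 m2 x1 x2 * kraw2 N u1 v1 u2 v2 n1 n2 x1 x2) = 0)"
    and "conds \<equiv> (of_real eta1 * u1 + of_real eta2 * v1 = 1
                 \<and> of_real eta1 * u2 + of_real eta2 * v2 = 1
                 \<and> of_real eta1 * u1 * u2 + of_real eta2 * v1 * v2 = 1)"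
  shows "(orth \<longrightarrow> conds)
       \<and> (conds \<and> u1 \<notin> {0,1} \<and> u2 \<notin> {0,1} \<and> v1 \<notin> {0,1} \<and> v2 \<notin> {0,1}
            \<and> u1 * v2 - u2 * v1 \<noteq> 0 \<longrightarrow> orth)"
proof -
  define e1 where "e1 = complex_of_real eta1"
  define e2 where "e2 = complex_of_real eta2"
  define C where "C a b c d = of_nat (trinom N a b * trinom N c d) * gram N eta1 eta2 u1 v1 u2 v2 a b c d"
    for a b c d
  have "orth \<longleftrightarrow> diagonal4 N C"
    unfolding C_def diagonal4_trinom_weighted orth_def gram_def by simp
  also have "\<dots> \<longleftrightarrow> 1 - (e1 * u1 + e2 * v1) = 0 \<and> 1 - (e1 * u2 + e2 * v2) = 0
                   \<and> 1 - (e1 * u1 + e2 * v1) - (e1 * u2 + e2 * v2) + (e1 * u1 * u2 + e2 * v1 * v2) = 0"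
    unfolding C_def e1_def e2_def
    by (rule diagonal4_iff_bilinear[OF gram_generating_function \<open>N \<ge> 1\<close>])
  also have "\<dots> \<longleftrightarrow> conds"
  proof -
    have "1 - A = 0 \<and> 1 - B = 0 \<and> 1 - A - B + AB = 0 \<longleftrightarrow> A = 1 \<and> B = 1 \<and> AB = 1" for A B AB :: complex
      by auto
    then show ?thesis unfolding conds_def e1_def e2_def .
  qed
  finally show ?thesis by blast
qed

end
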